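(* Suppose $(\mathcal W,\mathcal W,\mu)$ is a reduced system of the FTvN system $(\mathcal V,\mathcal W,\lambda)$, with $\mathcal W$ finite dimensional. Let $F:=\operatorname{ran}\lambda$ and let $F^*=\{w\in\mathcal W:\langle w,f\rangle\ge0\ \forall f\in F\}$ be its dual cone in $\mathcal W$. Then: (a) If $u,v\in F$ and $u-v\in F^*$, then $v\prec u$ in $\mathcal W$. (b) For all $x_1,\dots,x_k\in\mathcal V$, $\lambda(x_1+\cdots+x_k)\prec\lambda(x_1)+\cdots+\lambda(x_k)$ in $\mathcal W$. (c) $x\prec y$ in $\mathcal V$ implies $\lambda(x)\prec\lambda(y)$ in $\mathcal W$; the converse holds if $\mathcal V$ is finite dimensional.
   Context: A Fan-Theobald-von Neumann (FTvN) system is a triple $(\mathcal V,\mathcal W,\lambda)$ where $\mathcal V,\mathcal W$ are real inner product spaces and $\lambda:\mathcal V\to\mathcal W$ is a map such that: (A1) $\|\lambda(x)\|=\|x\|$ for all $x$; (A2) $\langle x,y\rangle\le\langle\lambda(x),\lambda(y)\rangle$ for all $x,y$; (A3) for every $c\in\mathcal V$ and $q\in\lambda(\mathcal V)$ there exists $x$ with $\lambda(x)=q$ and $\langle c,x\rangle=\langle\lambda(c),\lambda(x)\rangle$. A FTvN system $(\mathcal W,\mathcal W,\mu)$ is a reduced system of $(\mathcal V,\mathcal W,\lambda)$ if (C1) $\mu\circ\lambda=\lambda$ and (C2) $\operatorname{ran}\mu\subseteq\operatorname{ran}\lambda$. Majorization in $\mathcal V$: $x\prec y$ iff $x\in\operatorname{conv}\{z\in\mathcal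 V:\lambda(z)=\lambda(y)\}$. Majorization in $\mathcal W$ (with respect to $\mu$): $v\prec u$ iff $v\in\operatorname{conv}\{w\in\mathcal W:\mu(w)=\mu(u)\}$. *)

theory Defs
  imports "HOL-Analysis.Analysis"
begin

text \<open>Fan-Theobald-von Neumann system (V, W, lam): V and W are the real inner
product spaces given by the types 'a and 'b.\<close>
definition FTvN :: "('a::real_inner \<Rightarrow> 'b::real_inner) \<Rightarrow> bool" where
  "FTvN lam \<longleftrightarrow>
     (\<forall>x. norm (lam x) = norm x) \<and>
     (\<forall>x y. inner x y \<le> inner (lam x) (lam y)) \<and>
     (\<forall>c. \<forall>q\<in>range lam. \<exists>x. lam x = q \<and> inner c x = inner (lam c) (lam x))"

definition reduced_system :: "('b::real_inner \<Rightarrow> 'b) \<Rightarrow> ('a::real_inner \<Rightarrow> 'b) \<Rightarrow> bool" where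
  "reduced_system mu lam \<longleftrightarrow> FTvN lam \<and> FTvN mu \<and> mu \<circ> lam = lam \<and> range mu \<subseteq> range lam"

definition majorized :: "('a::real_vector \<Rightarrow> 'c) \<Rightarrow> 'a \<Rightarrow> 'a \<Rightarrow> bool" where
  "majorized lam x y \<longleftrightarrow> x \<in> convex hull {z. lam z = lam y}"

definition dual_cone :: "'b::real_inner set \<Rightarrow> 'b set" where
  "dual_cone F = {w. \<forall>f\<in>F. inner w f \<ge> 0}"

end

theory Submission
  imports Defs
begin

text \<open>
  In any FTvN system, \<open>x \<prec> y\<close> forces \<open>\<langle>c, x\<rangle> \<le> \<langle>\<lambda> c, \<lambda> y\<rangle>\<close> for all \<open>c\<close>, because this
  half-space contains the fibre \<open>{z. \<lambda> z = \<lambda> y}\<close>. In finite dimension the converse holds: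
  the fibre is compact, hence so is its convex hull (Caratheodory), and by (A3) the bound
  \<open>\<langle>\<lambda> c, \<lambda> y\<rangle>\<close> is attained on the fibre, so no hyperplane separates \<open>x\<close> from the hull.
  Together with (A2) this reads: \<open>x \<prec> y\<close> iff \<open>\<lambda> y - \<lambda> x \<in> F\<^sup>*\<close>.

  For a reduced system, \<open>ran \<mu> = F\<close> and \<open>\<mu>\<close> fixes \<open>F\<close>; the same criterion then shows that
  \<open>v \<in> F\<close> and \<open>u - v \<in> F\<^sup>*\<close> give \<open>v \<prec> u\<close> in \<open>W\<close>, whether or not \<open>u \<in> F\<close>. This is (a), and
  (b), (c) follow because \<open>\<Sum> \<lambda> x\<^sub>i - \<lambda> (\<Sum> x\<^sub>i)\<close> and, for \<open>x \<prec> y\<close>, \<open>\<lambda> y - \<lambda> x\<close> lie in \<open>F\<^sup>*\<close>.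
\<close>

lemma affine_dependent_if_card_gt:
  fixes S B :: "'a::real_vector set"
  assumes "finite B" "span B = UNIV" "finite S" "card B + 1 < card S"
  shows "affine_dependent S"
proof -
  obtain a where a: "a \<in> S"
    using assms(4) by fastforce
  let ?T = "(\<lambda>x. -a + x) ` (S - {a})"
  have "card ?T = card S - 1"
    using a assms(3) by (subst card_image) (auto simp: inj_on_def)
  then have "\<not> card ?T \<le> card B"
    using assms(4) by linarith
  then have "dependent ?T"
    using independent_span_bound[OF assms(1)] assms(2) by blast
  then show ?thesis
    using affine_dependent_iff_dependent2[OF a] by simp
qed

lemma convex_hull_remove_point_affine_dependent:
  fixes S :: "'a::real_vector set"
  assumes S: "finite S" "affine_dependent S" and y: "y \<in> convex hull S"
  obtains a where "a \<in> S" "y \<in> convex hull (S - {a})"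
proof -
  obtain u where u: "\<forall>x\<in>S. 0 \<le> u x" "sum u S = 1" "(\<Sum>x\<in>S. u x *\<^sub>R x) = y"
    using y convex_hull_finite[OF S(1)] by auto
  obtain w where w: "sum w S = 0" "\<exists>v\<in>S. w v \<noteq> 0" "(\<Sum>x\<in>S. w x *\<^sub>R x) = 0"
    using S affine_dependent_explicit_finite by blast
  let ?P = "{x\<in>S. 0 < w x}"
  have "?P \<noteq> {}"
  proof
    assume "?P = {}"
    then have "\<forall>x\<in>S. w x \<le> 0" by force
    then have "\<forall>x\<in>S. - w x = 0"
      using w(1) sum_nonneg_eq_0_iff[OF S(1), of "\<lambda>x. - w x"] by (simp add: sum_negf)
    then show False using w(2) by auto
  qed
  moreover have "finite ?P"
    using S(1) by simp
  ultimately obtain a where "a \<in> ?P" and a_min: "\<forall>x\<in>?P. u a / w a \<le> u x / w x"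
    using ex_is_arg_min_if_finite[of ?P "\<lambda>x. u x / w x"] unfolding is_arg_min_linorder by blast
  then have a: "a \<in> S" "0 < w a"
    by simp_all
  \<comment> \<open>Move along the affine dependence until the first weight drops to zero.\<close>
  define t where "t = u a / w a"
  define u' where "u' x = u x - t * w x" for x
  have "0 \<le> t"
    using a u(1) by (simp add: t_def)
  have u'_nonneg: "0 \<le> u' x" if "x \<in> S" for x
  proof (cases "0 < w x")
    case True
    then have "t \<le> u x / w x"
      using a_min that unfolding t_def by blast
    then show ?thesis using True by (simp add: u'_def pos_le_divide_eq)
  next
    case False
    then have "t * w x \<le> 0"
      using \<open>0 \<le> t\<close> by (simp add: mult_nonneg_nonpos)
    moreover have "0 \<le> u x"
      using u(1) that by blast
    ultimately show ?thesis
      by (simp add: u'_def)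
  qed
  have "u' a = 0"
    using a by (simp add: u'_def t_def)
  have remove_a: "sum f (S - {a}) = sum f S" if "f a = 0" for f :: "'a \<Rightarrow> 'b::ab_group_add"
    using that a(1) S(1) by (simp add: sum.remove)
  have "sum u' S = 1"
    using u(2) w(1) by (simp add: u'_def sum_subtractf sum_distrib_left[symmetric])
  moreover have "(\<Sum>x\<in>S. u' x *\<^sub>R x) = y"
    using u(3) w(3)
    by (simp add: u'_def scaleR_diff_left sum_subtractf scaleR_sum_right[symmetric] flip: scaleR_scaleR)
  ultimately show thesis
    using a u'_nonneg \<open>u' a = 0\<close> S(1)
    by (intro that[of a]) (auto simp: convex_hull_finite remove_a intro!: exI[of _ u'])
qed

lemma caratheodory_finite_span:
  fixes p B :: "'a::real_vector set"
  assumes B: "finite B" "span B = UNIV" and x: "x \<in> convex hull p"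
  obtains S where "finite S" "S \<subseteq> p" "card S \<le> card B + 1" "x \<in> convex hull S"
proof -
  obtain S0 where S0: "finite S0" "S0 \<subseteq> p" "x \<in> convex hull S0"
    using x by (auto simp: convex_hull_explicit convex_hull_finite)
  have "\<exists>S \<subseteq> S0. card S \<le> card B + 1 \<and> x \<in> convex hull S"
    using S0(1,3)
  proof (induction "card S0" arbitrary: S0 rule: less_induct)
    case (less S)
    show ?case
    proof (cases "card S \<le> card B + 1")
      case False
      then have "affine_dependent S"
        using affine_dependent_if_card_gt[OF B less.prems(1)] by simp
      then obtain a where a: "a \<in> S" "x \<in> convex hull (S - {a})"
        using convex_hull_remove_point_affine_dependent less.prems by blast
      have "card (S - {a}) < card S"
        using less.prems(1) a(1) by (intro card_Diff1_less)
      moreover have "finite (S - {a})"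
        using less.prems(1) by simp
      ultimately obtain T where "T \<subseteq> S - {a}" "card T \<le> card B + 1" "x \<in> convex hull T"
        using less.hyps a(2) by blast
      then show ?thesis
        by (intro exI[of _ T]) auto
    qed (use less.prems in auto)
  qed
  then show thesis
    using S0 that by (meson finite_subset order_trans)
qed

primrec iterated_join :: "'a::real_vector set \<Rightarrow> nat \<Rightarrow> 'a set" where
  "iterated_join K 0 = K"
| "iterated_join K (Suc n) =
     {(1 - u) *\<^sub>R a + u *\<^sub>R y | a y u. 0 \<le> u \<and> u \<le> 1 \<and> a \<in> K \<and> y \<in> iterated_join K n}"

lemma compact_iterated_join:
  fixes K :: "'a::real_normed_vector set"
  assumes "compact K"
  shows "compact (iterated_join K n)"
  by (induction n) (simp_all add: assms compact_convex_combinations)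

lemma iterated_join_subset_convex_hull: "iterated_join K n \<subseteq> convex hull K"
proof (induction n)
  case (Suc n)
  show ?case
  proof clarsimp
    fix a y and u :: real
    assume "0 \<le> u" "u \<le> 1" "a \<in> K" "y \<in> iterated_join K n"
    then show "(1 - u) *\<^sub>R a + u *\<^sub>R y \<in> convex hull K"
      using Suc.IH by (intro convexD_alt[OF convex_convex_hull]) (auto intro: hull_inc)
  qed
qed (simp add: hull_subset)

lemma iterated_join_mono:
  assumes "m \<le> n"
  shows "iterated_join K m \<subseteq> iterated_join K n"
proof -
  have "iterated_join K n \<subseteq> iterated_join K (Suc n)" for n
  proof
    fix y assume y: "y \<in> iterated_join K n"
    then obtain a where "a \<in> K"
      using iterated_join_subset_convex_hull by fastforce
    then show "y \<in> iterated_join K (Suc n)"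
      unfolding iterated_join.simps mem_Collect_eq
      by (intro exI[of _ a] exI[of _ y] exI[of _ 1]) (simp add: y)
  qed
  then show ?thesis
    using lift_Suc_mono_le[of "iterated_join K"] assms by blast
qed

lemma convex_hull_subset_iterated_join:
  assumes "finite T" "T \<noteq> {}" "T \<subseteq> K"
  shows "convex hull T \<subseteq> iterated_join K (card T - 1)"
  using assms
proof (induction T rule: finite_ne_induct)
  case (insert a T)
  have card: "card (insert a T) - 1 = Suc (card T - 1)"
    using insert.hyps by (simp add: card_gt_0_iff)
  have hull_T: "convex hull T \<subseteq> iterated_join K (card T - 1)"
    using insert.IH insert.prems by blast
  show ?case
  proof
    fix x assume "x \<in> convex hull (insert a T)"
    then obtain u v b where "0 \<le> u" "0 \<le> v" "u + v = 1" "b \<in> convex hull T"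
      "x = u *\<^sub>R a + v *\<^sub>R b"
      unfolding convex_hull_insert[OF insert.hyps(2)] mem_Collect_eq by blast
    then have "x = (1 - v) *\<^sub>R a + v *\<^sub>R b" "v \<le> 1"
      by auto
    then show "x \<in> iterated_join K (card (insert a T) - 1)"
      unfolding card iterated_join.simps mem_Collect_eq
      using insert.prems hull_T \<open>0 \<le> v\<close> \<open>b \<in> convex hull T\<close>
      by (intro exI[of _ a] exI[of _ b] exI[of _ v]) auto
  qed
qed simp

lemma compact_convex_hull_finite_span:
  fixes K B :: "'a::real_normed_vector set"
  assumes "finite B" "span B = UNIV" "compact K"
  shows "compact (convex hull K)"
proof -
  have "convex hull K \<subseteq> iterated_join K (card B)"
  proof
    fix x assume "x \<in> convex hull K"
    then obtain S where S: "finite S" "S \<subseteq> K" "card S \<le> card B + 1" "x \<in> convex hull S"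
      using caratheodory_finite_span[OF assms(1,2)] by blast
    then have "S \<noteq> {}" by auto
    then have "x \<in> iterated_join K (card S - 1)"
      using convex_hull_subset_iterated_join[OF S(1) _ S(2)] S(4) by blast
    moreover have "card S - 1 \<le> card B"
      using S(3) by linarith
    ultimately show "x \<in> iterated_join K (card B)"
      using iterated_join_mono by blast
  qed
  then have "convex hull K = iterated_join K (card B)"
    using iterated_join_subset_convex_hull by blast
  then show ?thesis
    using compact_iterated_join[OF assms(3)] by simp
qed

lemma bounded_combinations_insert:
  fixes C :: "'a::real_vector set"
  assumes "finite C" "a \<notin> C"
  shows "{\<Sum>c\<in>insert a C. t c *\<^sub>R c | t. \<forall>c\<in>insert a C. \<bar>t c\<bar> \<le> R}
    = (\<lambda>(s, k). s *\<^sub>R a + k) ` ({-R..R} \<times> {\<Sum>c\<in>C. t c *\<^sub>R c | t. \<forall>c\<in>C. \<bar>t c\<bar> \<le> R})"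
    (is "?L = ?f ` (_ \<times> ?K)")
proof (intro equalityI subsetI)
  fix y assume "y \<in> ?L"
  then obtain t where y: "y = t a *\<^sub>R a + (\<Sum>c\<in>C. t c *\<^sub>R c)"
    and t: "\<forall>c\<in>insert a C. \<bar>t c\<bar> \<le> R"
    using assms by auto
  have "t a \<in> {-R..R}"
    using t by (simp add: abs_le_iff)
  moreover have "(\<Sum>c\<in>C. t c *\<^sub>R c) \<in> ?K"
    using t by blast
  ultimately have "(t a, \<Sum>c\<in>C. t c *\<^sub>R c) \<in> {-R..R} \<times> ?K"
    by (rule SigmaI)
  then show "y \<in> ?f ` ({-R..R} \<times> ?K)"
    by (rule rev_image_eqI) (simp add: y)
next
  fix y assume "y \<in> ?f ` ({-R..R} \<times> ?K)"
  then obtain s k where s: "s \<in> {-R..R}" and "k \<in> ?K" and y: "y = s *\<^sub>R a + k"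
    by (elim imageE SigmaE) (simp add: that)
  then obtain t where t: "\<forall>c\<in>C. \<bar>t c\<bar> \<le> R" "k = (\<Sum>c\<in>C. t c *\<^sub>R c)"
    by blast
  have "(\<Sum>c\<in>C. (t(a := s)) c *\<^sub>R c) = k"
    unfolding t(2) using assms(2) by (intro sum.cong) auto
  then have "y = (\<Sum>c\<in>insert a C. (t(a := s)) c *\<^sub>R c)"
    using assms y by simp
  moreover have "\<forall>c\<in>insert a C. \<bar>(t(a := s)) c\<bar> \<le> R"
    using s t(1) by (simp add: abs_le_iff)
  ultimately show "y \<in> ?L"
    by blast
qed

lemma compact_bounded_combinations:
  fixes C :: "'a::real_normed_vector set"
  assumes "finite C"
  shows "compact {\<Sum>c\<in>C. t c *\<^sub>R c | t. \<forall>c\<in>C. \<bar>t c\<bar> \<le> R}"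
  using assms
proof (induction C rule: finite_induct)
  case (insert a C)
  let ?K = "{\<Sum>c\<in>C. t c *\<^sub>R c | t. \<forall>c\<in>C. \<bar>t c\<bar> \<le> R}"
  have "compact ((\<lambda>(s, k). s *\<^sub>R a + k) ` ({-R..R} \<times> ?K))"
    by (intro compact_continuous_image compact_Times compact_Icc insert.IH)
      (auto simp: split_def intro!: continuous_intros)
  then show ?case
    by (simp only: bounded_combinations_insert[OF insert.hyps])
next
  case empty
  have "{\<Sum>c\<in>{}. t c *\<^sub>R c | t. \<forall>c\<in>{}. \<bar>t c\<bar> \<le> R} = {0 :: 'a}"
    by auto
  then show ?case
    by (metis compact_sing)
qed

lemma compact_if_bounded_closed_finite_span:
  fixes K B :: "'a::real_inner set"
  assumes "finite B" "span B = UNIV" "bounded K" "closed K"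
  shows "compact K"
proof -
  obtain C where C: "finite C" "span C = span B" "pairwise orthogonal C"
    using basis_orthogonal[OF assms(1)] by blast
  define D where "D = C - {0}"
  have D: "finite D" "span D = UNIV" "0 \<notin> D"
    using C assms(2) by (simp_all add: D_def)
  have orth: "inner c d = 0" if "c \<in> D" "d \<in> D" "c \<noteq> d" for c d
    using C(3) that by (auto simp: D_def pairwise_def orthogonal_def)
  obtain M where M: "\<forall>x\<in>K. norm x \<le> M"
    using assms(3) unfolding bounded_iff by blast
  define R where "R = (\<Sum>c\<in>D. \<bar>M\<bar> / norm c)"
  have "K \<subseteq> {\<Sum>c\<in>D. t c *\<^sub>R c | t. \<forall>c\<in>D. \<bar>t c\<bar> \<le> R}"
  proof
    fix x assume x: "x \<in> K"
    have "x \<in> range (\<lambda>t. \<Sum>c\<in>D. t c *\<^sub>R c)"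
      using span_finite[OF D(1)] D(2) by simp
    then obtain t where t: "x = (\<Sum>c\<in>D. t c *\<^sub>R c)"
      by blast
    have "\<bar>t c\<bar> \<le> R" if c: "c \<in> D" for c
    proof -
      have nc: "0 < norm c" using D(3) c by auto
      have "inner x c = (\<Sum>d\<in>D. t d * inner d c)"
        using t by (simp add: inner_sum_left)
      also have "\<dots> = (\<Sum>d\<in>D. if d = c then t c * inner c c else 0)"
        using orth c by (intro sum.cong) auto
      also have "\<dots> = t c * inner c c"
        using D(1) c by simp
      finally have "\<bar>t c\<bar> * (norm c * norm c) \<le> norm x * norm c"
        using Cauchy_Schwarz_ineq2[of x c] by (simp add: abs_mult flip: power2_norm_eq_inner power2_eq_square)
      then have "\<bar>t c\<bar> \<le> norm x / norm c"
        using nc by (simp add: pos_le_divide_eq)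
      also have "\<dots> \<le> \<bar>M\<bar> / norm c"
        using M x nc by (intro divide_right_mono) auto
      also have "\<dots> \<le> R"
        unfolding R_def using D(1) c by (intro member_le_sum) auto
      finally show ?thesis .
    qed
    then show "x \<in> {\<Sum>c\<in>D. t c *\<^sub>R c | t. \<forall>c\<in>D. \<bar>t c\<bar> \<le> R}"
      using t by blast
  qed
  then have "K = {\<Sum>c\<in>D. t c *\<^sub>R c | t. \<forall>c\<in>D. \<bar>t c\<bar> \<le> R} \<inter> K"
    by blast
  also have "compact \<dots>"
    by (intro compact_Int_closed compact_bounded_combinations D(1) assms(4))
  finally show ?thesis .
qed

lemma separating_point_compact_convex:
  fixes S :: "'a::real_inner set"
  assumes "compact S" "convex S" "x \<notin> S"
  obtains c where "\<And>z. z \<in> S \<Longrightarrow> inner c z < inner c x"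
proof (cases "S = {}")
  case False
  have "continuous_on S (dist x)"
    by (intro continuous_intros)
  then obtain y where y: "y \<in> S" and y_min: "\<And>z. z \<in> S \<Longrightarrow> dist x y \<le> dist x z"
    using continuous_attains_inf[OF assms(1) False] by blast
  have "inner (x - y) z < inner (x - y) x" if z: "z \<in> S" for z
  proof -
    have "inner (x - y) (z - y) \<le> 0"
      using any_closest_point_dot[OF assms(2) compact_imp_closed[OF assms(1)] y z] y_min by blast
    moreover have "0 < inner (x - y) (x - y)"
      using y assms(3) by auto
    ultimately show ?thesis
      by (simp add: inner_diff_right)
  qed
  then show thesis by (rule that)
qed simp

lemma FTvN_norm_eq: "FTvN lam \<Longrightarrow> norm (lam x) = norm x"
  unfolding FTvN_def by blast

lemma FTvN_inner_le: "FTvN lam \<Longrightarrow> inner x y \<le> inner (lam x) (lam y)"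
  unfolding FTvN_def by blast

lemma FTvN_obtain_aligned:
  assumes "FTvN lam" "q \<in> range lam"
  obtains x where "lam x = q" "inner c x = inner (lam c) q"
  using assms unfolding FTvN_def by metis

lemma FTvN_lipschitz:
  assumes "FTvN lam"
  shows "norm (lam x - lam y) \<le> norm (x - y)"
proof -
  have "(norm (lam x - lam y))\<^sup>2 = (norm (lam x))\<^sup>2 + (norm (lam y))\<^sup>2 - 2 * inner (lam x) (lam y)"
    by (simp add: power2_norm_eq_inner inner_diff inner_commute algebra_simps)
  also have "\<dots> \<le> (norm x)\<^sup>2 + (norm y)\<^sup>2 - 2 * inner x y"
    using FTvN_norm_eq[OF assms] FTvN_inner_le[OF assms, of x y] by simp
  also have "\<dots> = (norm (x - y))\<^sup>2"
    by (simp add: power2_norm_eq_inner inner_diff inner_commute algebra_simps)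
  finally show ?thesis
    by (simp add: power2_le_iff_abs_le)
qed

lemma compact_FTvN_fibre:
  fixes lam :: "'a::real_inner \<Rightarrow> 'b::real_inner" and B :: "'a set"
  assumes "FTvN lam" "finite B" "span B = UNIV"
  shows "compact {z. lam z = q}"
proof (rule compact_if_bounded_closed_finite_span[OF assms(2,3)])
  have "continuous_on UNIV lam"
    using FTvN_lipschitz[OF assms(1)]
    by (intro lipschitz_on_continuous_on[of 1]) (auto simp: lipschitz_on_def dist_norm)
  then show "closed {z. lam z = q}"
    by (intro closed_Collect_eq continuous_on_const)
  have "{z. lam z = q} \<subseteq> cball 0 (norm q)"
  proof
    fix z assume "z \<in> {z. lam z = q}"
    then have "norm z = norm q"
      using FTvN_norm_eq[OF assms(1), of z] by simp
    then show "z \<in> cball 0 (norm q)"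
      by simp
  qed
  then show "bounded {z. lam z = q}"
    by (rule bounded_subset[OF bounded_cball])
qed

lemma majorized_imp_inner_le:
  assumes "FTvN lam" "majorized lam x y"
  shows "inner c x \<le> inner (lam c) (lam y)"
proof -
  have "{z. lam z = lam y} \<subseteq> {z. inner c z \<le> inner (lam c) (lam y)}"
    using FTvN_inner_le[OF assms(1), of c] by (metis (mono_tags) mem_Collect_eq subsetI)
  then have "convex hull {z. lam z = lam y} \<subseteq> {z. inner c z \<le> inner (lam c) (lam y)}"
    by (intro hull_minimal) (auto simp: convex_halfspace_le)
  then show ?thesis
    using assms(2) unfolding majorized_def by auto
qed

lemma majorized_if_inner_le:
  fixes lam :: "'a::real_inner \<Rightarrow> 'b::real_inner" and B :: "'a set"
  assumes "FTvN lam" "finite B" "span B = UNIV"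
    and "\<And>c. inner c x \<le> inner (lam c) (lam y)"
  shows "majorized lam x y"
proof (rule ccontr)
  assume "\<not> majorized lam x y"
  then have "x \<notin> convex hull {z. lam z = lam y}"
    unfolding majorized_def .
  then obtain c where c: "\<And>z. z \<in> convex hull {z. lam z = lam y} \<Longrightarrow> inner c z < inner c x"
    using separating_point_compact_convex[OF compact_convex_hull_finite_span[OF assms(2,3)
        compact_FTvN_fibre[OF assms(1-3)]] convex_convex_hull] by blast
  obtain z where z: "lam z = lam y" "inner c z = inner (lam c) (lam y)"
    by (rule FTvN_obtain_aligned[OF assms(1) rangeI])
  have "inner c z < inner c x"
    using z(1) by (intro c hull_inc) simp
  then show False
    using z(2) assms(4)[of c] by linarith
qed

lemma majorized_imp_dual_cone:
  assumes "FTvN lam" "majorized lam x y"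
  shows "lam y - lam x \<in> dual_cone (range lam)"
  unfolding dual_cone_def
proof (intro CollectI ballI)
  fix f assume "f \<in> range lam"
  then obtain z where z: "lam z = f" "inner x z = inner (lam x) f"
    by (rule FTvN_obtain_aligned[OF assms(1)])
  have "inner (lam x) f = inner z x"
    using z(2) by (simp add: inner_commute)
  also have "\<dots> \<le> inner (lam z) (lam y)"
    by (rule majorized_imp_inner_le[OF assms])
  also have "\<dots> = inner (lam y) f"
    using z(1) by (simp add: inner_commute)
  finally show "0 \<le> inner (lam y - lam x) f"
    by (simp add: inner_diff_left)
qed

lemma majorized_if_dual_cone:
  fixes lam :: "'a::real_inner \<Rightarrow> 'b::real_inner" and B :: "'a set"
  assumes "FTvN lam" "finite B" "span B = UNIV"
    and "lam y - lam x \<in> dual_cone (range lam)"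
  shows "majorized lam x y"
proof (rule majorized_if_inner_le[OF assms(1-3)])
  fix c
  have "0 \<le> inner (lam y - lam x) (lam c)"
    using assms(4) unfolding dual_cone_def by blast
  then have "inner (lam c) (lam x) \<le> inner (lam c) (lam y)"
    by (simp add: inner_commute inner_diff_right)
  then show "inner c x \<le> inner (lam c) (lam y)"
    using FTvN_inner_le[OF assms(1), of c x] by linarith
qed

lemma FTvN_sum_dual_cone:
  assumes "FTvN lam"
  shows "(\<Sum>i\<in>I. lam (x i)) - lam (\<Sum>i\<in>I. x i) \<in> dual_cone (range lam)"
  unfolding dual_cone_def
proof (intro CollectI ballI)
  fix f assume "f \<in> range lam"
  then obtain z where z: "lam z = f" "inner (\<Sum>i\<in>I. x i) z = inner (lam (\<Sum>i\<in>I. x i)) f"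
    by (rule FTvN_obtain_aligned[OF assms])
  have "inner (lam (\<Sum>i\<in>I. x i)) f = (\<Sum>i\<in>I. inner (x i) z)"
    using z(2) by (simp add: inner_sum_left)
  also have "\<dots> \<le> (\<Sum>i\<in>I. inner (lam (x i)) (lam z))"
    by (intro sum_mono FTvN_inner_le[OF assms])
  also have "\<dots> = inner (\<Sum>i\<in>I. lam (x i)) f"
    using z(1) by (simp add: inner_sum_left)
  finally show "0 \<le> inner ((\<Sum>i\<in>I. lam (x i)) - lam (\<Sum>i\<in>I. x i)) f"
    by (simp add: inner_diff_left)
qed

lemma reduced_system_fixes_range:
  assumes "reduced_system mu lam" "w \<in> range lam"
  shows "mu w = w"
  using assms unfolding reduced_system_def by (auto simp: fun_eq_iff)

lemma reduced_system_range_eq: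
  assumes "reduced_system mu lam"
  shows "range mu = range lam"
proof
  show "range lam \<subseteq> range mu"
    using reduced_system_fixes_range[OF assms] by (metis image_subsetI rangeI)
qed (use assms in \<open>simp add: reduced_system_def\<close>)

lemma reduced_system_majorized_if_dual_cone:
  fixes lam :: "'a::real_inner \<Rightarrow> 'b::euclidean_space"
  assumes sys: "reduced_system mu lam"
    and v: "v \<in> range lam" and uv: "u - v \<in> dual_cone (range lam)"
  shows "majorized mu v u"
proof -
  have mu: "FTvN mu"
    using sys by (simp add: reduced_system_def)
  have mu_range: "mu c \<in> range lam" for c
    using reduced_system_range_eq[OF sys] by blast
  show ?thesis
  proof (rule majorized_if_inner_le[OF mu finite_Basis span_Basis])
    fix c
    have uv_c: "0 \<le> inner (u - v) (mu c)"
      using uv mu_range[of c] unfolding dual_cone_def by blast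
    have "inner c v \<le> inner (mu c) (mu v)"
      by (rule FTvN_inner_le[OF mu])
    also have "\<dots> = inner v (mu c)"
      using reduced_system_fixes_range[OF sys v] by (simp add: inner_commute)
    also have "\<dots> \<le> inner u (mu c)"
      using uv_c by (simp add: inner_diff_left)
    also have "\<dots> = inner (mu c) u"
      by (rule inner_commute)
    also have "\<dots> \<le> inner (mu (mu c)) (mu u)"
      by (rule FTvN_inner_le[OF mu])
    also have "\<dots> = inner (mu c) (mu u)"
      using reduced_system_fixes_range[OF sys mu_range] by simp
    finally show "inner c v \<le> inner (mu c) (mu u)" .
  qed
qed

theorem theorem10p3:
  fixes lam :: "'a::real_inner \<Rightarrow> 'b::euclidean_space"
    and mu :: "'b \<Rightarrow> 'b"
  assumes "reduced_system mu lam"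
  shows "(\<forall>u v. u \<in> range lam \<and> v \<in> range lam \<and> u - v \<in> dual_cone (range lam)
            \<longrightarrow> majorized mu v u)
       \<and> (\<forall>(k::nat) (x::nat \<Rightarrow> 'a).
            majorized mu (lam (\<Sum>i<k. x i)) (\<Sum>i<k. lam (x i)))
       \<and> (\<forall>x y. majorized lam x y \<longrightarrow> majorized mu (lam x) (lam y))
       \<and> ((\<exists>B::'a set. finite B \<and> span B = UNIV) \<longrightarrow>
            (\<forall>x y. majorized mu (lam x) (lam y) \<longrightarrow> majorized lam x y))"
proof (intro conjI allI impI; (elim conjE exE)?)
  have lam: "FTvN lam" and mu: "FTvN mu"
    using assms by (simp_all add: reduced_system_def)
  show "majorized mu v u" if "v \<in> range lam" "u - v \<in> dual_cone (range lam)" for u v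
    using reduced_system_majorized_if_dual_cone[OF assms] that by blast
  show "majorized mu (lam (\<Sum>i<k. x i)) (\<Sum>i<k. lam (x i))" for k x
    by (rule reduced_system_majorized_if_dual_cone[OF assms rangeI FTvN_sum_dual_cone[OF lam]])
  show "majorized mu (lam x) (lam y)" if "majorized lam x y" for x y
    by (rule reduced_system_majorized_if_dual_cone[OF assms rangeI majorized_imp_dual_cone[OF lam that]])
  show "majorized lam x y"
    if "finite B" "span B = UNIV" "majorized mu (lam x) (lam y)" for B :: "'a set" and x y
  proof (rule majorized_if_dual_cone[OF lam that(1,2)])
    have "mu (lam y) - mu (lam x) \<in> dual_cone (range mu)"
      by (rule majorized_imp_dual_cone[OF mu that(3)])
    then show "lam y - lam x \<in> dual_cone (range lam)"
      using reduced_system_fixes_range[OF assms] reduced_system_range_eq[OF assms] by simp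
  qed
qed

end
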